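(* A general map $\mathcal M=(B,\sigma,\alpha)$ has a single component (i.e. is a map) if and only if $\mathcal M$ has a quasi-tree.
   Context: A general map is a triple $\mathcal M=(B,\sigma,\alpha)$ where $B$ is a finite set (of flags), $\sigma,\alpha$ are permutations of $B$, and $\alpha$ is a fixed-point-free involution. Its components are the orbits of the group $\langle\sigma,\alpha\rangle$ on $B$; it is a map if $\langle\sigma,\alpha\rangle$ acts transitively on $B$. The edges of $\mathcal M$ are the cycles of $\alpha$ (two-element sets); for $b\in B$ write $\underline b=\{b,\alpha(b)\}$. For a set $F$ of edges, let $\alpha_F$ be the permutation of $B$ equal to $\alpha$ on $\bigcup F$ and to the identity elsewhere; the tour of $F$ in $\mathcal M$ is the permutation $\tau=\sigma\alpha_F$, i.e. $\tau(b)=\sigma(\alpha(b))$ if $\underline b\in F$ and $\tau(b)=\sigma(b)$ otherwise. A quasi-tree of $\mathcal M$ is a set $F$ of edges whose tour in $\mathcal M$ is a single cycle (a cyclic permutation of all of $B$). *)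

theory Defs
  imports "HOL-Combinatorics.Permutations"
begin

definition general_map :: "'a set \<Rightarrow> ('a \<Rightarrow> 'a) \<Rightarrow> ('a \<Rightarrow> 'a) \<Rightarrow> bool" where
  "general_map B \<sigma> \<alpha> \<longleftrightarrow> finite B \<and> \<sigma> permutes B \<and> \<alpha> permutes B \<and>
     (\<forall>b\<in>B. \<alpha> (\<alpha> b) = b \<and> \<alpha> b \<noteq> b)"

text \<open>Transitivity of the group generated by sigma and alpha: any flag is reachable
  from any other by applying sigma, alpha and their inverses.\<close>
definition is_map :: "'a set \<Rightarrow> ('a \<Rightarrow> 'a) \<Rightarrow> ('a \<Rightarrow> 'a) \<Rightarrow> bool" where
  "is_map B \<sigma> \<alpha> \<longleftrightarrow>
     (\<forall>b\<in>B. \<forall>c\<in>B. (b, c) \<in> ({(x, \<sigma> x) | x. x \<in> B} \<union> {(\<sigma> x, x) | x. x \<in> B}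
                              \<union> {(x, \<alpha> x) | x. x \<in> B} \<union> {(\<alpha> x, x) | x. x \<in> B})\<^sup>*)"

definition edges :: "'a set \<Rightarrow> ('a \<Rightarrow> 'a) \<Rightarrow> 'a set set" where
  "edges B \<alpha> = {{b, \<alpha> b} | b. b \<in> B}"

definition alpha_F :: "('a \<Rightarrow> 'a) \<Rightarrow> 'a set set \<Rightarrow> 'a \<Rightarrow> 'a" where
  "alpha_F \<alpha> F = (\<lambda>b. if b \<in> \<Union>F then \<alpha> b else b)"

definition tour :: "('a \<Rightarrow> 'a) \<Rightarrow> ('a \<Rightarrow> 'a) \<Rightarrow> 'a set set \<Rightarrow> 'a \<Rightarrow> 'a" where
  "tour \<sigma> \<alpha> F = \<sigma> \<circ> alpha_F \<alpha> F"

definition single_cycle_on :: "'a set \<Rightarrow> ('a \<Rightarrow> 'a) \<Rightarrow> bool" where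
  "single_cycle_on B \<tau> \<longleftrightarrow> \<tau> permutes B \<and> (\<forall>b\<in>B. \<forall>c\<in>B. \<exists>n. (\<tau> ^^ n) b = c)"

definition quasi_tree :: "'a set \<Rightarrow> ('a \<Rightarrow> 'a) \<Rightarrow> ('a \<Rightarrow> 'a) \<Rightarrow> 'a set set \<Rightarrow> bool" where
  "quasi_tree B \<sigma> \<alpha> F \<longleftrightarrow> F \<subseteq> edges B \<alpha> \<and> single_cycle_on B (tour \<sigma> \<alpha> F)"

end

(* Adding or removing an edge {b, \<alpha> b} multiplies the tour on the right by the transposition
   of b and \<alpha> b, and composing a permutation with the transposition of two points lying in
   different cycles merges these two cycles.  Fix a flag b0 and choose F so that the orbit O of b0
   under the tour is as large as possible.  If O were not all of B, then O could not be closed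
   under \<alpha>: otherwise it would also be closed under \<sigma> = tour \<circ> alpha_F, hence be a union
   of components.  So some b in O has \<alpha> b outside O, and toggling the edge {b, \<alpha> b} merges
   the cycle of \<alpha> b into O, contradicting maximality.  Conversely, every step of a tour is a
   \<sigma>-step, possibly preceded by an \<alpha>-step, so a tour through all flags connects them. *)

theory Submission
  imports Defs "HOL-Combinatorics.Orbits"
begin

lemma orbit_eq_if_mem:
  assumes "permutation t" "y \<in> orbit t x"
  shows "orbit t y = orbit t x"
  using orbit_cyclic_eq3[OF cyclic_on_orbit'[OF assms(1)] assms(2)] .

lemma apply_mem_orbit_iff:
  assumes "permutation t"
  shows "t y \<in> orbit t x \<longleftrightarrow> y \<in> orbit t x"
proof
  assume "t y \<in> orbit t x"
  moreover obtain S where "t permutes S" using assms by (auto simp: permutation_permutes)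
  ultimately show "y \<in> orbit t x"
    using cyclic_on_f_in cyclic_on_orbit' assms by metis
qed (rule orbit.step)

lemma orbit_comp_transpose:
  assumes perm: "permutation t" and y: "y \<notin> orbit t x"
  shows "orbit (t \<circ> transpose x y) x = orbit t x \<union> orbit t y"
proof -
  define t' where "t' = t \<circ> transpose x y"
  have self: "z \<in> orbit t z" for z by (rule permutation_self_in_orbit[OF perm])
  have x_notin: "x \<notin> orbit t y" using y orbit_swap[OF self] by blast
  have t'_x: "t' x = t y" and t'_y: "t' y = t x"
    and t'_other: "z \<noteq> x \<Longrightarrow> z \<noteq> y \<Longrightarrow> t' z = t z" for z
    by (simp_all add: t'_def)
  have y_in: "y \<in> orbit t' x"
    \<comment> \<open>from t' x = t y, the map t' follows the cycle of y, which avoids x, until it reaches y\<close>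
  proof (rule ccontr)
    assume y_out: "y \<notin> orbit t' x"
    have "orbit t y \<subseteq> orbit t' x"
    proof
      fix z assume "z \<in> orbit t y"
      then show "z \<in> orbit t' x"
      proof induction
        case base
        show ?case using orbit.base[of t' x] by (simp add: t'_x)
      next
        case (step z)
        then have "z \<noteq> x" "z \<noteq> y" using x_notin y_out by auto
        then show ?case using orbit.step[OF step.IH] by (simp add: t'_other)
      qed
    qed
    then show False using y_out self by blast
  qed
  have x_in: "x \<in> orbit t' x"
    by (rule permutation_self_in_orbit) (simp add: t'_def perm permutation_compose permutation_swap_id)
  have t_closed: "t z \<in> orbit t' x" if "z \<in> orbit t' x" for z
    using orbit.step[OF that] orbit.step[OF x_in] orbit.step[OF y_in]
    by (cases "z = x \<or> z = y") (auto simp: t'_x t'_y t'_other)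
  have "orbit t w \<subseteq> orbit t' x" if "w \<in> orbit t' x" for w
  proof
    fix z assume "z \<in> orbit t w"
    then show "z \<in> orbit t' x" by induction (use that t_closed in auto)
  qed
  moreover have "orbit t' x \<subseteq> orbit t x \<union> orbit t y"
  proof
    fix z assume "z \<in> orbit t' x"
    then show "z \<in> orbit t x \<union> orbit t y"
    proof induction
      case base
      show ?case by (simp add: t'_x orbit.base)
    next
      case (step z)
      have "t' z \<in> {t x, t y, t z}" by (cases "z = x \<or> z = y") (auto simp: t'_x t'_y t'_other)
      then show ?case using step.IH by (auto intro: orbit.intros)
    qed
  qed
  ultimately show ?thesis using x_in y_in t'_def by blast
qed

definition flag_moves :: "'a set \<Rightarrow> ('a \<Rightarrow> 'a) \<Rightarrow> ('a \<Rightarrow> 'a) \<Rightarrow> ('a \<times> 'a) set" where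
  "flag_moves B \<sigma> \<alpha> = {(x, \<sigma> x) | x. x \<in> B} \<union> {(\<sigma> x, x) | x. x \<in> B}
     \<union> {(x, \<alpha> x) | x. x \<in> B} \<union> {(\<alpha> x, x) | x. x \<in> B}"

lemma is_map_iff_flag_moves:
  "is_map B \<sigma> \<alpha> \<longleftrightarrow> (\<forall>b\<in>B. \<forall>c\<in>B. (b, c) \<in> (flag_moves B \<sigma> \<alpha>)\<^sup>*)"
  by (simp add: is_map_def flag_moves_def)

lemma is_map_invariant_set_eq:
  assumes "is_map B \<sigma> \<alpha>" "b \<in> S" "S \<subseteq> B"
    and \<sigma>_inv: "\<And>x. x \<in> B \<Longrightarrow> \<sigma> x \<in> S \<longleftrightarrow> x \<in> S"
    and \<alpha>_inv: "\<And>x. x \<in> B \<Longrightarrow> \<alpha> x \<in> S \<longleftrightarrow> x \<in> S"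
  shows "S = B"
proof
  show "B \<subseteq> S"
  proof
    fix c assume "c \<in> B"
    then have "(b, c) \<in> (flag_moves B \<sigma> \<alpha>)\<^sup>*"
      using assms(1-3) by (auto simp: is_map_iff_flag_moves)
    then show "c \<in> S"
      by induction (use assms(2) \<sigma>_inv \<alpha>_inv in \<open>auto simp: flag_moves_def\<close>)
  qed
qed (rule assms(3))

lemma funpow_in_rtrancl:
  assumes "\<And>x. x \<in> B \<Longrightarrow> f x \<in> B \<and> (x, f x) \<in> R\<^sup>*" "x \<in> B"
  shows "(x, (f ^^ n) x) \<in> R\<^sup>*"
proof -
  have "(f ^^ n) x \<in> B \<and> (x, (f ^^ n) x) \<in> R\<^sup>*"
    by (induction n) (use assms in \<open>auto intro: rtrancl_trans\<close>)
  then show ?thesis ..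
qed

lemma general_mapD:
  assumes "general_map B \<sigma> \<alpha>"
  shows "finite B" "\<sigma> permutes B" "\<alpha> permutes B"
    and "b \<in> B \<Longrightarrow> \<alpha> (\<alpha> b) = b" "b \<in> B \<Longrightarrow> \<alpha> b \<noteq> b" "b \<in> B \<Longrightarrow> \<alpha> b \<in> B"
  using assms by (auto simp: general_map_def permutes_in_image)

lemma Union_subset_if_subset_edges:
  assumes "general_map B \<sigma> \<alpha>" "F \<subseteq> edges B \<alpha>"
  shows "\<Union>F \<subseteq> B"
  using assms general_mapD(6)[OF assms(1)] by (auto simp: edges_def)

lemma alpha_F_apply:
  assumes gm: "general_map B \<sigma> \<alpha>" and F: "F \<subseteq> edges B \<alpha>" and z: "z \<in> B"
  shows "alpha_F \<alpha> F z = (if {z, \<alpha> z} \<in> F then \<alpha> z else z)"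
proof -
  have "{z, \<alpha> z} \<in> F" if "z \<in> e" "e \<in> F" for e
  proof -
    obtain c where c: "c \<in> B" "e = {c, \<alpha> c}" using F \<open>e \<in> F\<close> by (auto simp: edges_def)
    then have "e = {z, \<alpha> z}" using \<open>z \<in> e\<close> general_mapD(4)[OF gm c(1)] by auto
    then show ?thesis using \<open>e \<in> F\<close> by simp
  qed
  then show ?thesis by (auto simp: alpha_F_def)
qed

lemma alpha_F_outside:
  assumes "general_map B \<sigma> \<alpha>" "F \<subseteq> edges B \<alpha>" "z \<notin> B"
  shows "alpha_F \<alpha> F z = z"
  using Union_subset_if_subset_edges[OF assms(1,2)] assms(3) by (auto simp: alpha_F_def)

lemma alpha_F_alpha_F:
  assumes gm: "general_map B \<sigma> \<alpha>" and F: "F \<subseteq> edges B \<alpha>"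
  shows "alpha_F \<alpha> F (alpha_F \<alpha> F z) = z"
proof (cases "z \<in> B")
  case True
  have "{\<alpha> z, \<alpha> (\<alpha> z)} = {z, \<alpha> z}" using general_mapD(4)[OF gm True] by auto
  then show ?thesis
    using True general_mapD(4,6)[OF gm True] by (simp add: alpha_F_apply[OF gm F])
next
  case False
  then show ?thesis by (simp add: alpha_F_outside[OF gm F])
qed

lemma alpha_F_permutes:
  assumes "general_map B \<sigma> \<alpha>" "F \<subseteq> edges B \<alpha>"
  shows "alpha_F \<alpha> F permutes B"
  using involuntory_imp_bij[of "alpha_F \<alpha> F"] alpha_F_alpha_F[OF assms]
  by (auto simp: permutes_def bij_iff alpha_F_outside[OF assms])

lemma tour_permutes:
  assumes "general_map B \<sigma> \<alpha>" "F \<subseteq> edges B \<alpha>"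
  shows "tour \<sigma> \<alpha> F permutes B"
  unfolding tour_def
  by (rule permutes_compose[OF alpha_F_permutes[OF assms] general_mapD(2)[OF assms(1)]])

lemma permutation_tour:
  assumes "general_map B \<sigma> \<alpha>" "F \<subseteq> edges B \<alpha>"
  shows "permutation (tour \<sigma> \<alpha> F)"
  using tour_permutes[OF assms] general_mapD(1)[OF assms(1)] by (auto simp: permutation_permutes)

lemma single_cycle_on_if_orbit_eq:
  assumes "finite B" "\<tau> permutes B" "b \<in> B" "orbit \<tau> b = B"
  shows "single_cycle_on B \<tau>"
proof -
  have perm: "permutation \<tau>" using assms(1,2) by (auto simp: permutation_permutes)
  have "cyclic_on \<tau> B" by (rule cyclic_on_singleI) (use assms(3,4) in auto)
  then have "orbit \<tau> c = B" if "c \<in> B" for c using that by (simp add: orbit_cyclic_eq3)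
  then show ?thesis
    using assms(2) by (auto simp: single_cycle_on_def orbit_altdef_permutation[OF perm])
qed

definition toggle_edge :: "'a set set \<Rightarrow> 'a set \<Rightarrow> 'a set set" where
  "toggle_edge F e = (if e \<in> F then F - {e} else insert e F)"

lemma toggle_edge_subset_edges:
  "F \<subseteq> edges B \<alpha> \<Longrightarrow> b \<in> B \<Longrightarrow> toggle_edge F {b, \<alpha> b} \<subseteq> edges B \<alpha>"
  by (auto simp: toggle_edge_def edges_def)

lemma alpha_F_toggle_edge:
  assumes gm: "general_map B \<sigma> \<alpha>" and F: "F \<subseteq> edges B \<alpha>" and b: "b \<in> B"
  shows "alpha_F \<alpha> (toggle_edge F {b, \<alpha> b}) = alpha_F \<alpha> F \<circ> transpose b (\<alpha> b)"
proof
  fix z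
  let ?F' = "toggle_edge F {b, \<alpha> b}"
  have F': "?F' \<subseteq> edges B \<alpha>" by (rule toggle_edge_subset_edges[OF F b])
  have \<alpha>b: "\<alpha> b \<in> B" "\<alpha> (\<alpha> b) = b" "\<alpha> b \<noteq> b" using general_mapD[OF gm] b by auto
  show "alpha_F \<alpha> ?F' z = (alpha_F \<alpha> F \<circ> transpose b (\<alpha> b)) z"
  proof (cases "z \<in> B")
    case True
    have "{z, \<alpha> z} = {b, \<alpha> b} \<longleftrightarrow> z = b \<or> z = \<alpha> b"
      using \<alpha>b by (auto simp: doubleton_eq_iff)
    then have toggled: "{z, \<alpha> z} \<in> ?F' \<longleftrightarrow> ({z, \<alpha> z} \<in> F \<longleftrightarrow> z \<noteq> b \<and> z \<noteq> \<alpha> b)"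
      by (auto simp: toggle_edge_def)
    show ?thesis
      using True b \<alpha>b toggled
      by (auto simp: alpha_F_apply[OF gm F] alpha_F_apply[OF gm F'] insert_commute)
  next
    case False
    then have "z \<noteq> b" "z \<noteq> \<alpha> b" using b \<alpha>b by auto
    then show ?thesis using False by (simp add: alpha_F_outside[OF gm F] alpha_F_outside[OF gm F'])
  qed
qed

lemma tour_toggle_edge:
  assumes "general_map B \<sigma> \<alpha>" "F \<subseteq> edges B \<alpha>" "b \<in> B"
  shows "tour \<sigma> \<alpha> (toggle_edge F {b, \<alpha> b}) = tour \<sigma> \<alpha> F \<circ> transpose b (\<alpha> b)"
  by (simp add: tour_def alpha_F_toggle_edge[OF assms] o_assoc)

lemma tour_step_in_flag_moves:
  assumes gm: "general_map B \<sigma> \<alpha>" and F: "F \<subseteq> edges B \<alpha>" and x: "x \<in> B"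
  shows "(x, tour \<sigma> \<alpha> F x) \<in> (flag_moves B \<sigma> \<alpha>)\<^sup>*"
proof -
  have "(x, alpha_F \<alpha> F x) \<in> (flag_moves B \<sigma> \<alpha>)\<^sup>*"
    using x by (auto simp: alpha_F_apply[OF gm F x] flag_moves_def)
  moreover have "alpha_F \<alpha> F x \<in> B"
    using general_mapD(6)[OF gm x] x by (simp add: alpha_F_apply[OF gm F x])
  then have "(alpha_F \<alpha> F x, \<sigma> (alpha_F \<alpha> F x)) \<in> flag_moves B \<sigma> \<alpha>"
    by (auto simp: flag_moves_def)
  ultimately show ?thesis by (simp add: tour_def)
qed

lemma quasi_tree_imp_is_map:
  assumes gm: "general_map B \<sigma> \<alpha>" and "quasi_tree B \<sigma> \<alpha> F"
  shows "is_map B \<sigma> \<alpha>"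
  unfolding is_map_iff_flag_moves
proof (intro ballI)
  fix b c assume b: "b \<in> B" and c: "c \<in> B"
  have F: "F \<subseteq> edges B \<alpha>" and cycle: "single_cycle_on B (tour \<sigma> \<alpha> F)"
    using assms(2) by (auto simp: quasi_tree_def)
  have steps: "tour \<sigma> \<alpha> F x \<in> B \<and> (x, tour \<sigma> \<alpha> F x) \<in> (flag_moves B \<sigma> \<alpha>)\<^sup>*" if "x \<in> B" for x
    using tour_step_in_flag_moves[OF gm F that] permutes_in_image[OF tour_permutes[OF gm F]] that
    by blast
  obtain n where "(tour \<sigma> \<alpha> F ^^ n) b = c" using cycle b c by (auto simp: single_cycle_on_def)
  then show "(b, c) \<in> (flag_moves B \<sigma> \<alpha>)\<^sup>*" using funpow_in_rtrancl[OF steps b] by blast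
qed

lemma tour_orbit_not_alpha_closed:
  assumes gm: "general_map B \<sigma> \<alpha>" and im: "is_map B \<sigma> \<alpha>"
    and F: "F \<subseteq> edges B \<alpha>" and b0: "b0 \<in> B" and proper: "orbit (tour \<sigma> \<alpha> F) b0 \<noteq> B"
  shows "\<exists>b \<in> orbit (tour \<sigma> \<alpha> F) b0. \<alpha> b \<notin> orbit (tour \<sigma> \<alpha> F) b0"
proof (rule ccontr)
  let ?\<tau> = "tour \<sigma> \<alpha> F" and ?O = "orbit (tour \<sigma> \<alpha> F) b0"
  assume "\<not> ?thesis"
  then have \<alpha>_closed: "\<alpha> x \<in> ?O" if "x \<in> ?O" for x using that by blast
  have \<tau>_perm: "?\<tau> permutes B" by (rule tour_permutes[OF gm F])
  have perm: "permutation ?\<tau>" by (rule permutation_tour[OF gm F])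
  have \<alpha>_inv: "\<alpha> x \<in> ?O \<longleftrightarrow> x \<in> ?O" if "x \<in> B" for x
    using \<alpha>_closed[of "\<alpha> x"] \<alpha>_closed[of x] general_mapD(4)[OF gm that] by auto
  have \<alpha>_F_inv: "alpha_F \<alpha> F x \<in> ?O \<longleftrightarrow> x \<in> ?O" if "x \<in> B" for x
    using \<alpha>_inv[OF that] by (simp add: alpha_F_apply[OF gm F that])
  have "\<sigma> x = ?\<tau> (alpha_F \<alpha> F x)" for x by (simp add: tour_def alpha_F_alpha_F[OF gm F])
  then have \<sigma>_inv: "\<sigma> x \<in> ?O \<longleftrightarrow> x \<in> ?O" if "x \<in> B" for x
    using \<alpha>_F_inv[OF that] apply_mem_orbit_iff[OF perm] by simp
  have "?O = B"
    by (rule is_map_invariant_set_eq[OF im permutation_self_in_orbit[OF perm]])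
      (use permutes_orbit_subset[OF \<tau>_perm b0] \<sigma>_inv \<alpha>_inv in auto)
  then show False using proper by contradiction
qed

lemma tour_orbit_grows:
  assumes gm: "general_map B \<sigma> \<alpha>" and im: "is_map B \<sigma> \<alpha>"
    and F: "F \<subseteq> edges B \<alpha>" and b0: "b0 \<in> B" and proper: "orbit (tour \<sigma> \<alpha> F) b0 \<noteq> B"
  shows "\<exists>F' \<subseteq> edges B \<alpha>. orbit (tour \<sigma> \<alpha> F) b0 \<subset> orbit (tour \<sigma> \<alpha> F') b0"
proof -
  let ?\<tau> = "tour \<sigma> \<alpha> F"
  obtain b where b: "b \<in> orbit ?\<tau> b0" and \<alpha>b: "\<alpha> b \<notin> orbit ?\<tau> b0"
    using tour_orbit_not_alpha_closed[OF assms] by blast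
  have "?\<tau> permutes B" by (rule tour_permutes[OF gm F])
  then have bB: "b \<in> B" using permutes_orbit_subset[OF _ b0] b by blast
  have perm: "permutation ?\<tau>" by (rule permutation_tour[OF gm F])
  let ?F' = "toggle_edge F {b, \<alpha> b}"
  have F': "?F' \<subseteq> edges B \<alpha>" by (rule toggle_edge_subset_edges[OF F bB])
  have orbit_b: "orbit ?\<tau> b = orbit ?\<tau> b0" by (rule orbit_eq_if_mem[OF perm b])
  have merged: "orbit (tour \<sigma> \<alpha> ?F') b = orbit ?\<tau> b0 \<union> orbit ?\<tau> (\<alpha> b)"
    unfolding tour_toggle_edge[OF gm F bB]
    using orbit_comp_transpose[OF perm, of "\<alpha> b" b] \<alpha>b orbit_b by simp
  then have "b0 \<in> orbit (tour \<sigma> \<alpha> ?F') b"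
    using permutation_self_in_orbit[OF perm] by blast
  then have "orbit (tour \<sigma> \<alpha> ?F') b0 = orbit (tour \<sigma> \<alpha> ?F') b"
    by (rule orbit_eq_if_mem[OF permutation_tour[OF gm F']])
  also note merged
  finally have "orbit (tour \<sigma> \<alpha> ?F') b0 = orbit ?\<tau> b0 \<union> orbit ?\<tau> (\<alpha> b)" .
  moreover have "\<alpha> b \<in> orbit ?\<tau> (\<alpha> b)" by (rule permutation_self_in_orbit[OF perm])
  ultimately show ?thesis using F' \<alpha>b by blast
qed

lemma is_map_imp_quasi_tree:
  assumes gm: "general_map B \<sigma> \<alpha>" and im: "is_map B \<sigma> \<alpha>"
  shows "\<exists>F. quasi_tree B \<sigma> \<alpha> F"
proof (cases "B = {}")
  case True
  then show ?thesis
    using tour_permutes[OF gm, of "{}"] by (auto simp: quasi_tree_def single_cycle_on_def)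
next
  case False
  then obtain b0 where b0: "b0 \<in> B" by blast
  have fin: "finite B" by (rule general_mapD(1)[OF gm])
  let ?size = "\<lambda>F. card (orbit (tour \<sigma> \<alpha> F) b0)"
  have orbit_in_B: "orbit (tour \<sigma> \<alpha> F) b0 \<subseteq> B" if "F \<subseteq> edges B \<alpha>" for F
    by (rule permutes_orbit_subset[OF tour_permutes[OF gm that] b0])
  then have "\<forall>F. F \<subseteq> edges B \<alpha> \<longrightarrow> ?size F < Suc (card B)"
    using card_mono[OF fin] by (simp add: le_imp_less_Suc)
  then have "\<exists>F. F \<subseteq> edges B \<alpha> \<and> (\<forall>F'. F' \<subseteq> edges B \<alpha> \<longrightarrow> ?size F' \<le> ?size F)"
    by (rule Lattices_Big.ex_has_greatest_nat[where k = "{}", rotated]) simp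
  then obtain F where F: "F \<subseteq> edges B \<alpha>"
    and maximal: "\<And>F'. F' \<subseteq> edges B \<alpha> \<Longrightarrow> ?size F' \<le> ?size F"
    by blast
  have "orbit (tour \<sigma> \<alpha> F) b0 = B"
  proof (rule ccontr)
    assume "orbit (tour \<sigma> \<alpha> F) b0 \<noteq> B"
    then obtain F' where F': "F' \<subseteq> edges B \<alpha>"
      and "orbit (tour \<sigma> \<alpha> F) b0 \<subset> orbit (tour \<sigma> \<alpha> F') b0"
      using tour_orbit_grows[OF gm im F b0] by blast
    then have "?size F < ?size F'"
      using psubset_card_mono finite_subset[OF orbit_in_B[OF F'] fin] by blast
    then show False using maximal[OF F'] by simp
  qed
  then show ?thesis
    using F single_cycle_on_if_orbit_eq[OF fin tour_permutes[OF gm F] b0]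
    by (auto simp: quasi_tree_def)
qed

theorem lemma2:
  assumes "general_map B \<sigma> \<alpha>"
  shows "is_map B \<sigma> \<alpha> \<longleftrightarrow> (\<exists>F. quasi_tree B \<sigma> \<alpha> F)"
  using is_map_imp_quasi_tree[OF assms] quasi_tree_imp_is_map[OF assms] by blast

end
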